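(* Let $V$ be a vertex algebra, $g$ an automorphism of $V$ of finite order $T$, $W$ a $g$-twisted $\phi$-coordinated $V$-module and $U\subseteq W$ a subset. Then the submodule $\langle U\rangle$ generated by $U$ (the smallest submodule of $W$ containing $U$) equals $\mathrm{span}\{v_nw: v\in V,\ n\in(1/T)\mathbb Z,\ w\in U\}$.
   Context: $V$ is a vertex algebra with vacuum $\mathbf 1$, $Y(v,x)=\sum_{k\in\mathbb Z}v_kx^{-k-1}$; $g$ is an automorphism with $g^T=1$. A $g$-twisted $\phi$-coordinated $V$-module is a vector space $W$ with a linear map $Y_W(\cdot,x):V\to\mathrm{Hom}(W,W((x^{1/T})))$, $Y_W(v,x)=\sum_{n\in(1/T)\mathbb Z}v_nx^{-n-1}$, such that: (i) $Y_W(\mathbf 1,x)=\mathrm{id}_W$; (ii) $Y_W(gv,x)=\lim_{x^{1/T}\to\omega_T^{-1}x^{1/T}}Y_W(v,x)$ with $\omega_T=e^{-2\pi\sqrt{-1}/T}$; (iii) for $u,v\in V$ there is $k\in\mathbb N$ with $(x_1-x_2)^kY_W(u,x_1)Y_W(v,x_2)\in\mathrm{Hom}(W,W((x_1^{1/T},x_2^{1/T})))$ and $x_2^k(e^{x_0}-1)^kY_W(Y(u,x_0)v,x_2)=\big((x_1-x_2)^kY_W(u,x_1)Y_W(v,x_2)\big)|_{x_1^{1/T}=(x_2e^{x_0})^{1/T}}$ (where $x_1^{j/T}\mapsto x_2^{j/T}e^{jx_0/T}$). A submodule is a subspace invariant under all $v_n$. *)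

theory Defs
  imports Complex_Main "HOL-Library.Groups_Big_Fun"
begin

text \<open>The vertex operator of V is given by its modes: VY u n v = u_n v (n an integer).
  For a g-twisted phi-coordinated module with period T the modes are indexed by
  n in (1/T)Z; we write WY v j w for v_(j/T) w, with j an integer.\<close>

definition is_linear :: "(complex \<Rightarrow> 'a::ab_group_add \<Rightarrow> 'a) \<Rightarrow> (complex \<Rightarrow> 'b::ab_group_add \<Rightarrow> 'b) \<Rightarrow> ('a \<Rightarrow> 'b) \<Rightarrow> bool"
  where "is_linear sA sB f \<longleftrightarrow> Vector_Spaces.linear sA sB f"

text \<open>Vertex algebra: linearity, truncation, vacuum, creation and Jacobi identity
  (in its component form, the Borcherds identity).\<close>
definition vertex_algebra ::
  "(complex \<Rightarrow> 'v::ab_group_add \<Rightarrow> 'v) \<Rightarrow> 'v \<Rightarrow> ('v \<Rightarrow> int \<Rightarrow> 'v \<Rightarrow> 'v) \<Rightarrow> bool" where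
  "vertex_algebra sV vac VY \<longleftrightarrow>
     vector_space sV \<and>
     (\<forall>u n. is_linear sV sV (VY u n)) \<and>
     (\<forall>n v. is_linear sV sV (\<lambda>u. VY u n v)) \<and>
     (\<forall>u v. \<exists>N. \<forall>n\<ge>N. VY u n v = 0) \<and>
     (\<forall>n v. VY vac n v = (if n = -1 then v else 0)) \<and>
     (\<forall>v n. n \<ge> 0 \<longrightarrow> VY v n vac = 0) \<and>
     (\<forall>v. VY v (-1) vac = v) \<and>
     (\<forall>u v w l m n.
        (\<Sum>i::nat. sV ((of_int m gchoose i) :: complex) (VY (VY u (l + int i) v) (m + n - int i) w))
        = (\<Sum>i::nat. sV ((-1) ^ i * (of_int l gchoose i))
             (VY u (l + m - int i) (VY v (n + int i) w)
              - sV ((-1) powi l) (VY v (l + n - int i) (VY u (m + int i) w)))))"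

definition va_automorphism ::
  "(complex \<Rightarrow> 'v::ab_group_add \<Rightarrow> 'v) \<Rightarrow> 'v \<Rightarrow> ('v \<Rightarrow> int \<Rightarrow> 'v \<Rightarrow> 'v) \<Rightarrow> ('v \<Rightarrow> 'v) \<Rightarrow> bool" where
  "va_automorphism sV vac VY g \<longleftrightarrow>
     is_linear sV sV g \<and> bij g \<and> g vac = vac \<and> (\<forall>u n v. g (VY u n v) = VY (g u) n (g v))"

definition omegaT :: "nat \<Rightarrow> complex" where
  "omegaT T = exp (- 2 * of_real pi * \<i> / of_nat T)"

text \<open>Coefficient of x1^(a/T) x2^(b/T) in (x1 - x2)^k Y_W(u,x1) Y_W(v,x2) w.\<close>
definition prodcoeff ::
  "(complex \<Rightarrow> 'w::ab_group_add \<Rightarrow> 'w) \<Rightarrow> nat \<Rightarrow> ('v \<Rightarrow> int \<Rightarrow> 'w \<Rightarrow> 'w)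
   \<Rightarrow> nat \<Rightarrow> 'v \<Rightarrow> 'v \<Rightarrow> 'w \<Rightarrow> int \<Rightarrow> int \<Rightarrow> 'w" where
  "prodcoeff sW T WY k u v w a b =
     (\<Sum>s\<le>k. sW (of_nat (k choose s) * (-1) ^ s)
        (WY u (int T * int (k - s) - int T - a) (WY v (int T * int s - int T - b) w)))"

text \<open>Coefficient of x2^(c/T) x0^p (p an integer) in
  x2^k (e^x0 - 1)^k Y_W(Y(u,x0)v, x2) w.\<close>
definition lhscoeff ::
  "(complex \<Rightarrow> 'w::ab_group_add \<Rightarrow> 'w) \<Rightarrow> nat \<Rightarrow> ('v \<Rightarrow> int \<Rightarrow> 'v \<Rightarrow> 'v) \<Rightarrow> ('v \<Rightarrow> int \<Rightarrow> 'w \<Rightarrow> 'w)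
   \<Rightarrow> nat \<Rightarrow> 'v \<Rightarrow> 'v \<Rightarrow> 'w \<Rightarrow> int \<Rightarrow> int \<Rightarrow> 'w" where
  "lhscoeff sW T VY WY k u v w c p =
     (\<Sum>q::nat. sW (of_real (\<Sum>r\<le>k. real (k choose r) * (-1) ^ (k - r) * real r ^ q / fact q))
        (WY (VY u (int q - p - 1) v) (int T * int k - int T - c) w))"

text \<open>Coefficient of x2^(c/T) x0^p in the substitution x1^(a/T) := x2^(a/T) e^(a x0/T)
  applied to (x1 - x2)^k Y_W(u,x1) Y_W(v,x2) w (only nonnegative powers of x0 occur).\<close>
definition rhscoeff ::
  "(complex \<Rightarrow> 'w::ab_group_add \<Rightarrow> 'w) \<Rightarrow> nat \<Rightarrow> ('v \<Rightarrow> int \<Rightarrow> 'w \<Rightarrow> 'w)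
   \<Rightarrow> nat \<Rightarrow> 'v \<Rightarrow> 'v \<Rightarrow> 'w \<Rightarrow> int \<Rightarrow> int \<Rightarrow> 'w" where
  "rhscoeff sW T WY k u v w c p =
     (if p < 0 then 0 else
      (\<Sum>a::int. sW (of_real ((real_of_int a / real T) ^ nat p / fact (nat p)))
         (prodcoeff sW T WY k u v w a (c - a))))"

definition twisted_phi_module ::
  "(complex \<Rightarrow> 'v::ab_group_add \<Rightarrow> 'v) \<Rightarrow> 'v \<Rightarrow> ('v \<Rightarrow> int \<Rightarrow> 'v \<Rightarrow> 'v) \<Rightarrow> ('v \<Rightarrow> 'v) \<Rightarrow> nat
   \<Rightarrow> (complex \<Rightarrow> 'w::ab_group_add \<Rightarrow> 'w) \<Rightarrow> ('v \<Rightarrow> int \<Rightarrow> 'w \<Rightarrow> 'w) \<Rightarrow> bool" where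
  "twisted_phi_module sV vac VY g T sW WY \<longleftrightarrow>
     vector_space sW \<and>
     (\<forall>v j. is_linear sW sW (WY v j)) \<and>
     (\<forall>j w. is_linear sV sW (\<lambda>v. WY v j w)) \<and>
     (\<forall>v w. \<exists>N. \<forall>j\<ge>N. WY v j w = 0) \<and>
     (\<forall>j w. WY vac j w = (if j = - int T then w else 0)) \<and>
     (\<forall>v j w. WY (g v) j w = sW (omegaT T powi j) (WY v j w)) \<and>
     (\<forall>u v. \<exists>k::nat.
        (\<forall>w. \<exists>A B. \<forall>a b. a < A \<or> b < B \<longrightarrow> prodcoeff sW T WY k u v w a b = 0) \<and>
        (\<forall>w c p. lhscoeff sW T VY WY k u v w c p = rhscoeff sW T WY k u v w c p))"

definition is_submodule :: "(complex \<Rightarrow> 'w::ab_group_add \<Rightarrow> 'w) \<Rightarrow> ('v \<Rightarrow> int \<Rightarrow> 'w \<Rightarrow> 'w) \<Rightarrow> 'w set \<Rightarrow> bool"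
  where "is_submodule sW WY S \<longleftrightarrow>
     module.subspace sW S \<and> (\<forall>v j w. w \<in> S \<longrightarrow> WY v j w \<in> S)"

definition generated_submodule :: "(complex \<Rightarrow> 'w::ab_group_add \<Rightarrow> 'w) \<Rightarrow> ('v \<Rightarrow> int \<Rightarrow> 'w \<Rightarrow> 'w) \<Rightarrow> 'w set \<Rightarrow> 'w set"
  where "generated_submodule sW WY U = \<Inter>{S. is_submodule sW WY S \<and> U \<subseteq> S}"

end

theory Submission
  imports Defs
begin

text \<open>The span of all v_n w with w \<in> U contains U (the vacuum acts as the identity in
  mode -1) and lies in every submodule containing U, so everything hinges on its closure
  under the modes u_m, that is, on u_m v_n w \<in> span {x_j w}.  Fix k as in the locality
  axiom.  For each c, the identity of coefficients of x_2^(c/T) x_0^p says that the power sums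
  \<Sum>_a (a/T)^p/p! F(a, c - a) of the coefficients F(a, b) of (x_1 - x_2)^k Y(u,x_1) Y(v,x_2) w
  equal coefficients of Y(Y(u,x_0)v, x_2) w, which lie in span {x_j w}.  Only finitely
  many a contribute, so Vandermonde inversion puts every F(a, b) in that span.  Finally
  F(a, b) is u_m v_n w plus a combination of terms u_m' v_n' w with n' > n, and v_n w
  vanishes for large n, so descending induction on n concludes.\<close>

context vector_space
begin

lemma subspace_Sum_any:
  assumes "subspace M" "\<And>q. f q \<in> M"
  shows "Sum_any f \<in> M"
  unfolding Sum_any.expand_set using assms by (intro subspace_sum) auto

lemma subspace_power_sums_imp_mem:
  fixes z :: "'c \<Rightarrow> 'a"
  assumes "finite I" "inj_on z I" "subspace M"
    and "\<And>p::nat. (\<Sum>a\<in>I. (z a ^ p) *s F a) \<in> M"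
  shows "\<forall>a\<in>I. F a \<in> M"
  using assms
proof (induction I arbitrary: F rule: finite_induct)
  case empty
  then show ?case by simp
next
  case (insert x I)
  \<comment> \<open>Weighting by z a - z x eliminates the x-term and preserves the hypothesis.\<close>
  define G where "G a = (z a - z x) *s F a" for a
  have "\<forall>a\<in>I. G a \<in> M"
  proof (rule insert.IH)
    show "inj_on z I" using insert.prems by (auto simp: inj_on_def)
    fix p :: nat
    have "(\<Sum>a\<in>I. (z a ^ p) *s G a) = (\<Sum>a\<in>insert x I. (z a ^ p) *s G a)"
      using insert.hyps by (simp add: G_def)
    also have "\<dots> = (\<Sum>a\<in>insert x I. (z a ^ Suc p) *s F a) - z x *s (\<Sum>a\<in>insert x I. (z a ^ p) *s F a)"
      by (simp add: G_def scale_sum_right sum_subtractf[symmetric] scale_left_diff_distrib algebra_simps)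
    also have "\<dots> \<in> M"
      by (intro subspace_diff subspace_scale insert.prems(2,3))
    finally show "(\<Sum>a\<in>I. (z a ^ p) *s G a) \<in> M" .
  qed fact
  moreover have "z a - z x \<noteq> 0" if "a \<in> I" for a
    using that insert.prems(1) insert.hyps(2) by (auto simp: inj_on_def)
  ultimately have FI: "\<forall>a\<in>I. F a \<in> M"
    using insert.prems(2) by (metis G_def scale_scale left_inverse scale_one subspace_scale)
  have "F x = (\<Sum>a\<in>insert x I. (z a ^ 0) *s F a) - (\<Sum>a\<in>I. F a)"
    using insert.hyps by simp
  also have "\<dots> \<in> M"
    using FI by (intro subspace_diff subspace_sum insert.prems(2,3)) auto
  finally show ?case using FI by simp
qed

lemma binomial_shift_sums_imp_mem:
  fixes P :: "int \<Rightarrow> int \<Rightarrow> 'b" and d :: int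
  assumes M: "subspace M" and d: "d > 0"
    and vanish: "\<And>m n. n \<ge> N \<Longrightarrow> P m n = 0"
    and sums: "\<And>i j. (\<Sum>s\<le>k. (of_nat (k choose s) * (-1) ^ s) *s P (i + d * int (k - s)) (j + d * int s)) \<in> M"
  shows "P m n \<in> M"
proof (induction "nat (N - n)" arbitrary: m n rule: less_induct)
  case less
  show ?case
  proof (cases "n \<ge> N")
    case True
    then show ?thesis using vanish M by (simp add: subspace_0)
  next
    case False
    define f where
      "f s = (of_nat (k choose s) * (-1) ^ s) *s P (m - d * int k + d * int (k - s)) (n + d * int s)" for s
    have "{..k} = insert 0 {1..k}" by auto
    then have "P m n = sum f {..k} - sum f {1..k}"
      by (simp add: f_def)
    moreover have "sum f {..k} \<in> M"
      using sums[of "m - d * int k" n] by (simp add: f_def)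
    moreover have fM: "f s \<in> M" if s: "s \<in> {1..k}" for s
    proof -
      have "d * int s \<ge> d" using s d by simp
      then have "nat (N - (n + d * int s)) < nat (N - n)" using False d by linarith
      then show ?thesis unfolding f_def using less M by (simp add: subspace_scale)
    qed
    then have "sum f {1..k} \<in> M" by (intro subspace_sum M fM)
    ultimately show ?thesis using M subspace_diff by metis
  qed
qed

end

lemma span_closed_under_hom:
  assumes "module_hom s s f" and "f ` S \<subseteq> module.span s S"
  shows "f ` module.span s S \<subseteq> module.span s S"
proof -
  interpret f: module_hom s s f by fact
  have "f ` f.m1.span S = f.m1.span (f ` S)" by (rule f.span_image[symmetric])
  also have "\<dots> \<subseteq> f.m1.span S"
    using assms(2) by (metis f.m1.span_minimal f.m1.subspace_span)
  finally show ?thesis .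
qed

lemma twisted_phi_module_mode_hom:
  assumes "twisted_phi_module sV vac VY g T sW WY"
  shows "module_hom sW sW (WY v j)"
  using assms unfolding twisted_phi_module_def is_linear_def
  by (simp add: module_hom_iff_linear)

lemma lhscoeff_mem_span_modes:
  assumes "vector_space sW"
  shows "lhscoeff sW T VY WY k u v w c p \<in> module.span sW {WY x j w | x j. True}"
proof -
  interpret W: vector_space sW by fact
  show ?thesis unfolding lhscoeff_def
    by (intro W.subspace_Sum_any W.subspace_scale W.span_base) auto
qed

lemma prodcoeff_mem_span_modes:
  assumes W: "vector_space sW" and T: "T > 0"
    and AB: "\<And>a b. a < A \<or> b < B \<Longrightarrow> prodcoeff sW T WY k u v w a b = 0"
    and jacobi: "\<And>c p. lhscoeff sW T VY WY k u v w c p = rhscoeff sW T WY k u v w c p"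
  shows "prodcoeff sW T WY k u v w a0 b0 \<in> module.span sW {WY x j w | x j. True}"
proof -
  interpret vector_space sW by fact
  define M where "M = span {WY x j w | x j. True}"
  define c where "c = a0 + b0"
  define F where "F a = prodcoeff sW T WY k u v w a (c - a)" for a
  have F0: "a \<in> {A..c-B}" if "F a \<noteq> 0" for a
    using that AB unfolding F_def by force
  have "\<forall>a\<in>{A..c-B}. F a \<in> M"
  proof (rule subspace_power_sums_imp_mem[where z = "\<lambda>a. of_int a"])
    show "inj_on (\<lambda>a. complex_of_int a) {A..c - B}" by (auto simp: inj_on_def)
    show "subspace M" by (simp add: M_def)
    fix p :: nat
    have "rhscoeff sW T WY k u v w c (int p) =
       (\<Sum>a\<in>{A..c-B}. sW (of_real ((real_of_int a / real T) ^ p / fact p)) (F a))"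
      unfolding rhscoeff_def F_def[symmetric]
      by (simp, subst Sum_any.expand_superset[where A = "{A..c-B}"]) (auto dest: F0)
    then have "sW (of_nat (fact p) * of_nat T ^ p) (rhscoeff sW T WY k u v w c (int p)) =
        (\<Sum>a\<in>{A..c-B}. sW (of_int a ^ p) (F a))"
      using T by (simp add: scale_sum_right power_divide field_simps)
    moreover have "sW (of_nat (fact p) * of_nat T ^ p) (rhscoeff sW T WY k u v w c (int p)) \<in> M"
      using lhscoeff_mem_span_modes[OF W, of T VY WY k u v w c "int p"] jacobi unfolding M_def
      by (simp add: span_scale)
    ultimately show "(\<Sum>a\<in>{A..c-B}. sW (of_int a ^ p) (F a)) \<in> M" by simp
  qed simp
  then have "F a0 \<in> M"
    using F0[of a0] by (cases "F a0 = 0") (auto simp: M_def span_zero)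
  then show ?thesis unfolding F_def c_def M_def by simp
qed

lemma twisted_phi_module_mode_mode_mem_span_modes:
  assumes T: "T > 0" and tw: "twisted_phi_module sV vac VY g T sW WY"
  shows "WY u m (WY v n w) \<in> module.span sW {WY x j w | x j. True}"
proof -
  interpret W: vector_space sW using tw unfolding twisted_phi_module_def by auto
  obtain k where
     "\<exists>A B. \<forall>a b. a < A \<or> b < B \<longrightarrow> prodcoeff sW T WY k u v w a b = 0"
     and jacobi: "\<And>c p. lhscoeff sW T VY WY k u v w c p = rhscoeff sW T WY k u v w c p"
    using tw unfolding twisted_phi_module_def by meson
  then obtain A B where AB: "\<And>a b. a < A \<or> b < B \<Longrightarrow> prodcoeff sW T WY k u v w a b = 0"
    by blast
  have coeff: "prodcoeff sW T WY k u v w a b \<in> W.span {WY x j w | x j. True}" for a b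
    using prodcoeff_mem_span_modes[OF W.vector_space_axioms T AB jacobi] .
  obtain N where N: "\<And>j. j \<ge> N \<Longrightarrow> WY v j w = 0"
    using tw unfolding twisted_phi_module_def by meson
  show ?thesis
  proof (rule W.binomial_shift_sums_imp_mem[where P = "\<lambda>m n. WY u m (WY v n w)"])
    show "int T > 0" using T by simp
    show "WY u m (WY v n w) = 0" if "n \<ge> N" for m n
      using N[OF that] module_hom.zero[OF twisted_phi_module_mode_hom[OF tw]] by simp
    fix i j
    show "(\<Sum>s\<le>k. sW (of_nat (k choose s) * (-1) ^ s)
        (WY u (i + int T * int (k - s)) (WY v (j + int T * int s) w))) \<in> W.span {WY x j w |x j. True}"
      using coeff[of "- int T - i" "- int T - j"]
      unfolding prodcoeff_def by (simp add: algebra_simps)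
  qed simp
qed

lemma twisted_phi_module_span_modes_is_submodule:
  assumes T: "T > 0" and tw: "twisted_phi_module sV vac VY g T sW WY"
  shows "is_submodule sW WY (module.span sW {WY v j w | v j w. w \<in> U})"
proof -
  interpret W: vector_space sW using tw unfolding twisted_phi_module_def by auto
  define S where "S = {WY v j w | v j w. w \<in> U}"
  have "WY u m y \<in> W.span S" if "y \<in> S" for u m y
  proof -
    obtain v n w where "y = WY v n w" "w \<in> U" using \<open>y \<in> S\<close> by (auto simp: S_def)
    moreover have "W.span {WY x j w | x j. True} \<subseteq> W.span S"
      using \<open>w \<in> U\<close> by (intro W.span_mono) (auto simp: S_def)
    ultimately show ?thesis
      using twisted_phi_module_mode_mode_mem_span_modes[OF T tw] by blast
  qed
  then have closed: "WY u m ` W.span S \<subseteq> W.span S" for u m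
    by (intro span_closed_under_hom twisted_phi_module_mode_hom[OF tw]) blast
  show ?thesis
    unfolding is_submodule_def S_def[symmetric]
  proof (intro conjI allI impI)
    fix v j w assume "w \<in> W.span S"
    then show "WY v j w \<in> W.span S" using closed[of v j] by auto
  qed (rule W.subspace_span)
qed

theorem proposition2p8:
  fixes sV :: "complex \<Rightarrow> 'v::ab_group_add \<Rightarrow> 'v" and vac :: 'v
    and VY :: "'v \<Rightarrow> int \<Rightarrow> 'v \<Rightarrow> 'v" and g :: "'v \<Rightarrow> 'v" and T :: nat
    and sW :: "complex \<Rightarrow> 'w::ab_group_add \<Rightarrow> 'w" and WY :: "'v \<Rightarrow> int \<Rightarrow> 'w \<Rightarrow> 'w"
    and U :: "'w set"
  assumes "vertex_algebra sV vac VY"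
    and "va_automorphism sV vac VY g"
    and "T > 0" and "g ^^ T = id"
    and "twisted_phi_module sV vac VY g T sW WY"
  shows "generated_submodule sW WY U = module.span sW {WY v j w | v j w. w \<in> U}"
proof -
  note tw = assms(5)
  interpret W: vector_space sW using tw unfolding twisted_phi_module_def by auto
  define S where "S = {WY v j w | v j w. w \<in> U}"
  have "U \<subseteq> S"
  proof
    fix w assume "w \<in> U"
    moreover have "WY vac (- int T) w = w"
      using tw unfolding twisted_phi_module_def by simp
    ultimately show "w \<in> S" unfolding S_def by (metis (mono_tags, lifting) mem_Collect_eq)
  qed
  moreover have "W.span S \<subseteq> S'" if "is_submodule sW WY S'" "U \<subseteq> S'" for S'
    using that unfolding is_submodule_def S_def by (intro W.span_minimal) auto
  ultimately show ?thesis
    using twisted_phi_module_span_modes_is_submodule[OF assms(3) tw, of U] W.span_superset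
    unfolding generated_submodule_def S_def by blast
qed

end
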